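(* Fix $q_{\min}>0$ and let $\phi_t(n):=P^{\mathbb N_0}_t1_{\mathbb N_+}(n)$ for $n\in\mathbb N_0$, $t\ge 0$. Then: (a) for all $r\in\mathbb N_+$ and $t>0$, $\partial_t\phi_t(r)=2q_{\min}\big(\phi_t(r+1)+\phi_t(r-1)-2\phi_t(r)\big)\le 0$; (b) $\phi_t(y)\ge\phi_t(x)$ whenever $y\ge x$; (c) for all $r\in\mathbb N_+$ and $t>0$, $\phi_t(r)\le \dfrac{r}{2\sqrt{t\,q_{\min}}}$.
   Context: $\mathbb N_0=\{0,1,2,\dots\}$, $\mathbb N_+=\{1,2,\dots\}$. $G_{\mathbb N_0}=(\mathbb N_0,q_0)$ is the graph with $q_0(x,y)=2q_{\min}$ if $|x-y|=1$ and $x>0$, and $q_0(x,y)=0$ otherwise (a birth–death chain absorbed at $0$), with Laplacian $\Delta f(x)=\sum_y q_0(x,y)(f(y)-f(x))$. Its heat semigroup $P^{\mathbb N_0}_t$ on bounded functions is defined as follows: for finite $S$ let $q_S(x,y)=q_0(x,y)1_S(x)$ with Laplacian $\Delta_S$ and $P^S_tf=\sum_{k\ge0}t^k\Delta_S^k(f1_S)/k!$; then $P_tf=\lim_i P^{S_i}_tf$ pointwise along any increasing exhaustion of $\mathbb N_0$ by finite sets. *)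

theory Defs
  imports "HOL-Analysis.Analysis"
begin

definition q0 :: "real \<Rightarrow> nat \<Rightarrow> nat \<Rightarrow> real" where
  "q0 qmin x y = (if (y = x + 1 \<or> x = y + 1) \<and> x > 0 then 2 * qmin else 0)"

definition qS :: "real \<Rightarrow> nat set \<Rightarrow> nat \<Rightarrow> nat \<Rightarrow> real" where
  "qS qmin S x y = q0 qmin x y * indicator S x"

text \<open>Laplacian Delta_S f(x) = sum_y q_S(x,y)(f y - f x). The sum is over y \<le> x+1,
  which contains every y with q0(x,y) \<noteq> 0, so it is the full sum over N0.\<close>
definition lapS :: "real \<Rightarrow> nat set \<Rightarrow> (nat \<Rightarrow> real) \<Rightarrow> nat \<Rightarrow> real" where
  "lapS qmin S f x = (\<Sum>y\<le>Suc x. qS qmin S x y * (f y - f x))"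

definition heatS :: "real \<Rightarrow> nat set \<Rightarrow> real \<Rightarrow> (nat \<Rightarrow> real) \<Rightarrow> nat \<Rightarrow> real" where
  "heatS qmin S t f x =
     (\<Sum>k. t ^ k / fact k * ((lapS qmin S ^^ k) (\<lambda>y. f y * indicator S y)) x)"

definition heat :: "real \<Rightarrow> real \<Rightarrow> (nat \<Rightarrow> real) \<Rightarrow> nat \<Rightarrow> real" where
  "heat qmin t f x = lim (\<lambda>i. heatS qmin {..i} t f x)"

definition phi :: "real \<Rightarrow> real \<Rightarrow> nat \<Rightarrow> real" where
  "phi qmin t n = heat qmin t (indicator {1..}) n"

end

theory Submission
  imports Defs
begin

text \<open>On all of N0 the Laplacian is 4 q (avg - id), where avg is the transition operator of
  the simple random walk absorbed at 0. The k-th term of the exponential series of a truncated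
  Laplacian only sees k sites to the right of x, so P_t is the exponential series of the full
  Laplacian, and a Cauchy product with the series of exp (-4 q t) exhibits phi_t(x) as the mean of
  (avg^N 1_N+)(x) over N Poisson of mean 4 q t. Explicitly avg^n 1_N+ (x) is the sum over
  i = 1..x of C(n, (n+i) div 2) / 2^n. Its increments decrease in x, which gives monotonicity and
  concavity, and the first one is at most 1/sqrt(n+1) by a central binomial estimate; averaging
  x/sqrt(N+1) over N yields the bound x/(2 sqrt(q t)). The derivative formula is termwise
  differentiation of the exponential series.\<close>

lemma lapS_eq:
  "lapS q S h x =
     (if x \<in> S \<and> 0 < x then 2*q*(h (Suc x) - h x) + 2*q*(h (x-1) - h x) else 0)"
proof (cases "x \<in> S \<and> 0 < x")
  case True
  have "lapS q S h x = (\<Sum>y\<in>{x-1, Suc x}. qS q S x y * (h y - h x))"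
    unfolding lapS_def by (rule sum.mono_neutral_right) (auto simp: qS_def q0_def)
  with True show ?thesis by (simp add: qS_def q0_def)
next
  case False
  then show ?thesis by (auto simp: lapS_def qS_def q0_def)
qed

lemma abs_lapS_le:
  assumes "q \<ge> 0" and "\<And>y. \<bar>h y\<bar> \<le> B"
  shows "\<bar>lapS q S h x\<bar> \<le> 8*q*B"
proof -
  have "\<bar>h (Suc x) - h x + (h (x-1) - h x)\<bar> \<le> 4*B"
    using assms(2)[of "Suc x"] assms(2)[of x] assms(2)[of "x-1"] by linarith
  then have "2*q * \<bar>h (Suc x) - h x + (h (x-1) - h x)\<bar> \<le> 2*q*(4*B)"
    by (rule mult_left_mono) (use assms(1) in simp)
  then have "\<bar>2*q*(h (Suc x) - h x) + 2*q*(h (x-1) - h x)\<bar> \<le> 2*q*(4*B)"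
    using assms(1) by (simp add: abs_mult flip: distrib_left)
  moreover have "0 \<le> B" using assms(2)[of 0] by linarith
  ultimately show ?thesis using assms(1) by (simp add: lapS_eq)
qed

lemma abs_lapS_pow_le:
  assumes "q \<ge> 0" and "\<And>y. \<bar>h y\<bar> \<le> B"
  shows "\<bar>(lapS q S ^^ k) h x\<bar> \<le> (8*q)^k * B"
proof (induction k arbitrary: x)
  case 0
  then show ?case using assms(2) by simp
next
  case (Suc k)
  have "\<bar>lapS q S ((lapS q S ^^ k) h) x\<bar> \<le> 8*q*((8*q)^k * B)"
    by (rule abs_lapS_le[OF assms(1) Suc.IH])
  then show ?case by (simp add: mult.assoc)
qed

lemma lapS_pow_truncate:
  assumes "x + k \<le> i"
  shows "(lapS q {..i} ^^ k) (\<lambda>y. h y * indicator {..i} y) x = (lapS q UNIV ^^ k) h x"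
  using assms
proof (induction k arbitrary: x)
  case 0
  then show ?case by simp
next
  case (Suc k)
  then show ?case by (simp add: lapS_eq[of q "{..i}"] lapS_eq[of q UNIV])
qed

lemma summable_exp_real: "summable (\<lambda>k. c ^ k / fact k :: real)"
  using summable_exp[of c] by (simp add: field_simps)

lemma exp_series_lapS_pow_bound:
  assumes "q \<ge> 0" and "\<And>y. \<bar>h y\<bar> \<le> B"
  shows "\<bar>t ^ k / fact k * (lapS q S ^^ k) h x\<bar> \<le> B * ((8*q*\<bar>t\<bar>) ^ k / fact k)"
proof -
  have "\<bar>t ^ k / fact k * (lapS q S ^^ k) h x\<bar> = \<bar>t\<bar>^k / fact k * \<bar>(lapS q S ^^ k) h x\<bar>"
    by (simp add: abs_mult power_abs)
  also have "\<dots> \<le> \<bar>t\<bar>^k / fact k * ((8*q)^k * B)"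
    by (rule mult_left_mono[OF abs_lapS_pow_le[OF assms]]) simp
  also have "\<dots> = B * ((8*q*\<bar>t\<bar>) ^ k / fact k)"
    using assms(1) by (simp add: power_mult_distrib abs_mult)
  finally show ?thesis .
qed

lemma summable_exp_series_lapS_pow:
  assumes "q \<ge> 0" and "\<And>y. \<bar>h y\<bar> \<le> B"
  shows "summable (\<lambda>k. \<bar>t ^ k / fact k * (lapS q S ^^ k) h x\<bar>)"
  by (rule summable_comparison_test'[OF summable_mult[OF summable_exp_real, of B]])
     (use exp_series_lapS_pow_bound[OF assms] in simp)

definition heat_series :: "real \<Rightarrow> real \<Rightarrow> (nat \<Rightarrow> real) \<Rightarrow> nat \<Rightarrow> real" where
  "heat_series q t h x = (\<Sum>k. t ^ k / fact k * (lapS q UNIV ^^ k) h x)"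

lemma heat_series_sums:
  assumes "q \<ge> 0" and "\<And>y. \<bar>h y\<bar> \<le> B"
  shows "(\<lambda>k. t ^ k / fact k * (lapS q UNIV ^^ k) h x) sums heat_series q t h x"
  unfolding heat_series_def
  by (rule summable_sums[OF summable_rabs_cancel[OF summable_exp_series_lapS_pow[OF assms]]])

lemma heatS_atMost_tendsto:
  assumes "q \<ge> 0" and h: "\<And>y. \<bar>h y\<bar> \<le> B"
  shows "(\<lambda>i. heatS q {..i} t h x) \<longlonglongrightarrow> heat_series q t h x"
proof -
  define a where "a k i = t ^ k / fact k * (lapS q {..i} ^^ k) (\<lambda>y. h y * indicator {..i} y) x"
    for k i
  have "(\<lambda>i. a k i) \<longlonglongrightarrow> t ^ k / fact k * (lapS q UNIV ^^ k) h x" for k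
    by (rule tendsto_eventually)
       (auto simp: a_def eventually_sequentially lapS_pow_truncate intro!: exI[of _ "x + k"])
  moreover have "norm (a k i) \<le> B * ((8*q*\<bar>t\<bar>) ^ k / fact k)" for k i
  proof -
    have "\<bar>h y * indicator {..i} y\<bar> \<le> B" for y
      using h[of y] h[of 0] by (auto simp: indicator_def)
    then show ?thesis
      unfolding a_def real_norm_def by (rule exp_series_lapS_pow_bound[OF assms(1)])
  qed
  moreover have "summable (\<lambda>k. B * ((8*q*\<bar>t\<bar>) ^ k / fact k))"
    by (intro summable_mult summable_exp_real)
  ultimately have "(\<lambda>i. suminf (\<lambda>k. a k i)) \<longlonglongrightarrow> heat_series q t h x"
    unfolding heat_series_def
    by (intro tannerys_theorem[THEN conjunct2, THEN conjunct2] always_eventually) auto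
  then show ?thesis by (simp add: heatS_def a_def)
qed

lemma heat_eq_heat_series:
  assumes "q \<ge> 0" and "\<And>y. \<bar>h y\<bar> \<le> B"
  shows "heat q t h x = heat_series q t h x"
  unfolding heat_def by (rule limI[OF heatS_atMost_tendsto[OF assms]])

lemma heat_series_has_real_derivative:
  assumes "q \<ge> 0" and "\<And>y. \<bar>h y\<bar> \<le> B" and "0 < r"
  shows "((\<lambda>s. heat_series q s h r) has_real_derivative
           2*q*(heat_series q t h (r+1) + heat_series q t h (r-1) - 2 * heat_series q t h r)) (at t)"
proof -
  define c where "c n = (lapS q UNIV ^^ n) h r / fact n" for n
  have series: "heat_series q s h r = (\<Sum>n. c n * s^n)" for s
    unfolding heat_series_def c_def by (simp add: field_simps)
  have "summable (\<lambda>n. c n * s^n)" for s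
    using summable_rabs_cancel[OF summable_exp_series_lapS_pow[OF assms(1,2)]]
    by (simp add: c_def field_simps)
  then have "((\<lambda>s. \<Sum>n. c n * s^n) has_real_derivative (\<Sum>n. diffs c n * t^n)) (at t)"
    by (rule termdiffs_strong_converges_everywhere)
  moreover have "(\<lambda>n. diffs c n * t^n) sums
      (2*q*(heat_series q t h (r+1) + heat_series q t h (r-1) - 2 * heat_series q t h r))"
  proof -
    have "diffs c n * t^n = t^n / fact n * lapS q UNIV ((lapS q UNIV ^^ n) h) r" for n
      unfolding diffs_def c_def fact_Suc by (simp add: field_simps del: of_nat_Suc)
    then have "diffs c n * t^n = 2*q*(t^n / fact n * (lapS q UNIV ^^ n) h (r+1)
        + t^n / fact n * (lapS q UNIV ^^ n) h (r-1) - 2 * (t^n / fact n * (lapS q UNIV ^^ n) h r))"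
      for n using \<open>0 < r\<close> by (simp add: lapS_eq algebra_simps)
    then show ?thesis
      by (simp only:) (intro sums_mult sums_diff sums_add heat_series_sums[OF assms(1,2)])
  qed
  ultimately show ?thesis
    unfolding series[abs_def] by (simp add: sums_iff)
qed

definition avg :: "(nat \<Rightarrow> real) \<Rightarrow> nat \<Rightarrow> real" where
  "avg h x = (if 0 < x then (h (Suc x) + h (x - 1)) / 2 else h x)"

lemma lapS_UNIV_eq_avg: "lapS q UNIV h x = 4*q*(avg h x - h x)"
  by (simp add: lapS_eq avg_def algebra_simps)

lemma avg_scale: "avg (\<lambda>y. c * g y) x = c * avg g x"
  by (simp add: avg_def algebra_simps)

lemma avg_sum: "avg (\<lambda>y. \<Sum>j\<in>A. c j * g j y) x = (\<Sum>j\<in>A. c j * avg (g j) x)"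
  by (simp add: avg_def sum_divide_distrib ring_distribs flip: sum.distrib)

lemma abs_avg_le:
  assumes "\<And>y. \<bar>h y\<bar> \<le> B"
  shows "\<bar>avg h x\<bar> \<le> B"
  using assms[of x] assms[of "Suc x"] assms[of "x - 1"] by (auto simp: avg_def abs_le_iff field_simps)

lemma abs_avg_pow_le:
  assumes "\<And>y. \<bar>h y\<bar> \<le> B"
  shows "\<bar>(avg ^^ n) h x\<bar> \<le> B"
  by (induction n arbitrary: x) (simp_all add: assms abs_avg_le)

lemma alternating_binomial_sum_Suc:
  fixes g :: "nat \<Rightarrow> 'a::comm_ring_1"
  shows "(\<Sum>j\<le>Suc k. of_nat (Suc k choose j) * (-1)^(Suc k - j) * g j)
       = (\<Sum>j\<le>k. of_nat (k choose j) * (-1)^(k - j) * g (Suc j))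
         - (\<Sum>j\<le>k. of_nat (k choose j) * (-1)^(k - j) * g j)"
proof -
  have "- (\<Sum>j\<le>k. of_nat (k choose j) * (-1)^(k - j) * g j)
      = (\<Sum>j\<le>Suc k. of_nat (k choose j) * (-1)^(Suc k - j) * g j)"
    by (simp add: sum_negf[symmetric] Suc_diff_le binomial_eq_0)
  also have "\<dots> = (-1)^(Suc k) * g 0 + (\<Sum>j\<le>k. of_nat (k choose Suc j) * (-1)^(k - j) * g (Suc j))"
    by (subst sum.atMost_Suc_shift) simp
  finally have "- (\<Sum>j\<le>k. of_nat (k choose j) * (-1)^(k - j) * g j)
      = (-1)^(Suc k) * g 0 + (\<Sum>j\<le>k. of_nat (k choose Suc j) * (-1)^(k - j) * g (Suc j))" .
  moreover have "(\<Sum>j\<le>Suc k. of_nat (Suc k choose j) * (-1)^(Suc k - j) * g j)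
      = (-1)^(Suc k) * g 0 + (\<Sum>j\<le>k. of_nat (k choose Suc j) * (-1)^(k - j) * g (Suc j))
        + (\<Sum>j\<le>k. of_nat (k choose j) * (-1)^(k - j) * g (Suc j))"
    by (subst sum.atMost_Suc_shift) (simp add: sum.distrib[symmetric] algebra_simps)
  ultimately show ?thesis by simp
qed

lemma lapS_UNIV_pow_eq:
  "(lapS q UNIV ^^ k) h x = (4*q)^k * (\<Sum>j\<le>k. real (k choose j) * (-1)^(k - j) * (avg ^^ j) h x)"
proof (induction k arbitrary: x)
  case 0
  then show ?case by simp
next
  case (Suc k)
  have "(lapS q UNIV ^^ Suc k) h x = 4*q*(avg ((lapS q UNIV ^^ k) h) x - (lapS q UNIV ^^ k) h x)"
    by (simp add: lapS_UNIV_eq_avg)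
  also have "(lapS q UNIV ^^ k) h
      = (\<lambda>y. (4*q)^k * (\<Sum>j\<le>k. real (k choose j) * (-1)^(k - j) * (avg ^^ j) h y))"
    using Suc.IH by (rule ext)
  also have "avg \<dots> x
      = (4*q)^k * (\<Sum>j\<le>k. real (k choose j) * (-1)^(k - j) * (avg ^^ Suc j) h x)"
    by (simp only: avg_scale avg_sum funpow.simps o_def)
  finally show ?case
    unfolding Suc.IH alternating_binomial_sum_Suc by (simp add: algebra_simps)
qed

lemma heat_series_eq_poisson:
  assumes h: "\<And>y. \<bar>h y\<bar> \<le> B"
  shows "heat_series q t h x = exp (-(4*q*t)) * (\<Sum>n. (4*q*t)^n / fact n * (avg ^^ n) h x)"
proof -
  define s where "s = 4*q*t"
  define b where "b n = s^n / fact n * (avg ^^ n) h x" for n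
  define a where "a n = (-s)^n / fact n" for n
  have "summable (\<lambda>n. norm (b n))"
  proof (rule summable_comparison_test'[OF summable_mult[OF summable_exp_real[of "\<bar>s\<bar>"], of B]])
    show "norm (norm (b n)) \<le> B * (\<bar>s\<bar>^n / fact n)" for n
    proof -
      have "\<bar>s\<bar>^n / fact n * \<bar>(avg ^^ n) h x\<bar> \<le> \<bar>s\<bar>^n / fact n * B"
        by (rule mult_left_mono[OF abs_avg_pow_le[OF h]]) simp
      then show ?thesis by (simp add: b_def abs_mult power_abs mult_ac)
    qed
  qed
  moreover have "summable (\<lambda>n. norm (a n))"
    using summable_exp_real[of "\<bar>s\<bar>"] by (simp add: a_def power_abs)
  moreover have "(\<Sum>i\<le>k. b i * a (k - i)) = t ^ k / fact k * (lapS q UNIV ^^ k) h x" for k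
  proof -
    have "b i * a (k - i) = t^k / fact k * (4*q)^k * (real (k choose i) * (-1)^(k - i) * (avg ^^ i) h x)"
      if "i \<le> k" for i
    proof -
      have "s^i * s^(k - i) = (4*q*t)^k"
        using that by (simp add: s_def flip: power_add)
      moreover have "real (k choose i) = fact k / (fact i * fact (k - i))"
        using binomial_fact[OF that] by simp
      ultimately show ?thesis
        by (simp add: a_def b_def power_minus[of s] power_mult_distrib field_simps)
    qed
    then show ?thesis
      by (simp add: lapS_UNIV_pow_eq sum_distrib_left mult.assoc)
  qed
  ultimately have "suminf b * suminf a = (\<Sum>k. t ^ k / fact k * (lapS q UNIV ^^ k) h x)"
    by (simp add: Cauchy_product)
  also have "suminf a = exp (-s)"
    using exp_converges[of "-s"] by (simp add: a_def[abs_def] sums_iff field_simps)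
  finally show ?thesis
    unfolding heat_series_def s_def b_def by (simp add: mult.commute)
qed

definition walk_mass :: "nat \<Rightarrow> nat \<Rightarrow> real" where
  "walk_mass n i = real (n choose ((n + i) div 2)) / 2 ^ n"

definition survival :: "nat \<Rightarrow> nat \<Rightarrow> real" where
  "survival n x = (\<Sum>i\<in>{1..x}. walk_mass n i)"

lemma walk_mass_Suc:
  assumes "2 \<le> i"
  shows "2 * walk_mass (Suc n) i = walk_mass n (i - 1) + walk_mass n (i + 1)"
proof -
  obtain m where "(Suc n + i) div 2 = Suc m" "(n + (i - 1)) div 2 = m" "(n + (i + 1)) div 2 = Suc m"
    using assms by (intro that[of "(n + i - 1) div 2"]) presburger+
  then show ?thesis by (simp add: walk_mass_def field_simps)
qed

lemma walk_mass_Suc_1: "2 * walk_mass (Suc n) 1 = walk_mass n 1 + walk_mass n 2"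
proof -
  have "(Suc n + 1) div 2 = Suc (n div 2)" "(n + 2) div 2 = Suc (n div 2)"
    by presburger+
  moreover have "n choose ((n + 1) div 2) = n choose (n div 2)"
    by (cases "even n") (simp_all add: central_binomial_odd)
  ultimately show ?thesis by (simp add: walk_mass_def field_simps)
qed

lemma walk_mass_antimono:
  assumes "1 \<le> i" and "i \<le> j"
  shows "walk_mass n j \<le> walk_mass n i"
proof -
  have "n choose ((n + j) div 2) \<le> n choose ((n + i) div 2)"
  proof (cases "(n + j) div 2 \<le> n")
    case True
    with assms show ?thesis by (intro binomial_antimono) (auto intro: div_le_mono)
  next
    case False
    then show ?thesis by (simp add: binomial_eq_0)
  qed
  then show ?thesis by (simp add: walk_mass_def divide_right_mono)
qed

lemma survival_0_right [simp]: "survival n 0 = 0"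
  by (simp add: survival_def)

lemma survival_Suc: "survival n (Suc x) = survival n x + walk_mass n (Suc x)"
  by (simp add: survival_def)

lemma avg_survival: "avg (survival n) = survival (Suc n)"
proof
  fix x
  show "avg (survival n) x = survival (Suc n) x"
proof (induction x)
  case 0
  then show ?case by (simp add: avg_def survival_def)
next
  case (Suc x)
  show ?case
  proof (cases x)
    case 0
    then show ?thesis
      using walk_mass_Suc_1[of n] by (simp add: avg_def survival_Suc numeral_2_eq_2)
  next
    case (Suc y)
    then show ?thesis
      using Suc.IH walk_mass_Suc[of "x + 1" n]
      by (simp add: avg_def survival_Suc field_simps)
  qed
qed
qed

lemma survival_0: "survival 0 = indicator {1..}"
proof
  fix x
  show "survival 0 x = indicator {1..} x"
  proof (induction x)
    case (Suc x)
    then show ?case by (cases x) (auto simp: survival_Suc walk_mass_def)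
  qed simp
qed

text \<open>By the reflection principle, \<open>survival n x\<close> is the probability that the walk
  started at \<open>x\<close> has not reached \<open>0\<close> after \<open>n\<close> steps.\<close>
lemma avg_pow_indicator: "(avg ^^ n) (indicator {1..}) = survival n"
  by (induction n) (simp_all add: survival_0 avg_survival)

lemma survival_mono: "x \<le> y \<Longrightarrow> survival n x \<le> survival n y"
  unfolding survival_def
  by (rule sum_mono2) (auto simp: walk_mass_def)

lemma survival_concave:
  assumes "1 \<le> r"
  shows "survival n (r + 1) + survival n (r - 1) - 2 * survival n r \<le> 0"
proof -
  obtain r' where "r = Suc r'" using assms by (cases r) auto
  then show ?thesis
    using walk_mass_antimono[of r "Suc r" n] assms by (simp add: survival_Suc)
qed

lemma survival_le: "survival n r \<le> real r * walk_mass n 1"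
proof -
  have "survival n r \<le> (\<Sum>i\<in>{1..r}. walk_mass n 1)"
    unfolding survival_def by (intro sum_mono walk_mass_antimono) auto
  then show ?thesis by simp
qed

lemma central_binomial_Suc: "Suc m * (Suc (2*m) choose Suc m) = (2*m + 1) * (2*m choose m)"
  using Suc_times_binomial[of m "2*m"] by simp

lemma central_binomial_double: "(2 * Suc m choose Suc m) = 2 * (Suc (2*m) choose Suc m)"
proof -
  have "2 * Suc m = Suc (Suc (2*m))" by simp
  then have "(2 * Suc m choose Suc m) = (Suc (2*m) choose m) + (Suc (2*m) choose Suc m)"
    by simp
  also have "(Suc (2*m) choose m) = (Suc (2*m) choose Suc m)"
    using binomial_symmetric[of m "Suc (2*m)"] by (simp add: Suc_diff_le)
  finally show ?thesis by simp
qed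

lemma odd_central_binomial_sq_le:
  assumes "(2*m choose m)^2 * (2*m + 1) \<le> 4^(2*m)"
  shows "(Suc (2*m) choose Suc m)^2 * (2*m + 3) \<le> 4^(2*m + 1)"
proof -
  define c where "c = 2*m choose m"
  define e where "e = Suc (2*m) choose Suc m"
  have rel: "Suc m * e = (2*m + 1) * c"
    unfolding c_def e_def by (rule central_binomial_Suc)
  have "(Suc m)^2 * (e^2 * (2*m + 3)) = (Suc m * e)^2 * (2*m + 3)"
    by (simp only: power_mult_distrib mult.assoc)
  also have "\<dots> = (c^2 * (2*m + 1)) * ((2*m + 1) * (2*m + 3))"
    unfolding rel by (simp add: power_mult_distrib power2_eq_square algebra_simps)
  also have "\<dots> \<le> 4^(2*m) * ((2*m + 1) * (2*m + 3))"
    using assms unfolding c_def by (rule mult_right_mono) simp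
  also have "\<dots> \<le> 4^(2*m) * (4 * (Suc m)^2)"
    by (rule mult_left_mono) (simp_all add: power2_eq_square algebra_simps)
  finally show ?thesis
    unfolding e_def by simp
qed

lemma central_binomial_sq_le: "(2*m choose m)^2 * (2*m + 1) \<le> 4^(2*m)"
proof (induction m)
  case 0
  then show ?case by simp
next
  case (Suc m)
  define e where "e = Suc (2*m) choose Suc m"
  have "(2 * Suc m choose Suc m)^2 * (2 * Suc m + 1) = 4 * (e^2 * (2*m + 3))"
    unfolding central_binomial_double e_def[symmetric] by (simp add: power_mult_distrib algebra_simps)
  also have "\<dots> \<le> 4 * 4^(2*m + 1)"
    using odd_central_binomial_sq_le[OF Suc.IH] unfolding e_def[symmetric] by simp
  finally show ?case by simp
qed

lemma binomial_half_sq_le: "(n choose ((n + 1) div 2))^2 * (n + 1) \<le> 4^n"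
proof (cases "even n")
  case True
  then obtain m where "n = 2*m" by blast
  then show ?thesis using central_binomial_sq_le[of m] by simp
next
  case False
  then obtain m where n: "n = Suc (2*m)" using oddE by fastforce
  have "(Suc (2*m) choose Suc m)^2 * (2*m + 2) \<le> (Suc (2*m) choose Suc m)^2 * (2*m + 3)"
    by (rule mult_left_mono) simp_all
  then show ?thesis
    using odd_central_binomial_sq_le[OF central_binomial_sq_le[of m]] n by simp
qed

lemma walk_mass_1_sq_le: "(walk_mass n 1)^2 * (n + 1) \<le> 1"
proof -
  have "real ((n choose ((n + 1) div 2))^2 * (n + 1)) \<le> real (4^n)"
    using binomial_half_sq_le[of n] by (simp only: of_nat_le_iff)
  moreover have "(2::real)^n * 2^n = 4^n"
    by (simp flip: power_mult_distrib)
  ultimately have "(real (n choose ((n + 1) div 2)))^2 * (n + 1) \<le> (2^n)^2"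
    by (simp add: power2_eq_square algebra_simps)
  then show ?thesis
    by (simp add: walk_mass_def power_divide field_simps)
qed

lemma abs_indicator_le_1: "\<bar>indicator A x :: real\<bar> \<le> 1"
  by (simp add: indicator_def)

lemma abs_survival_le_1: "\<bar>survival n x\<bar> \<le> 1"
proof -
  have "\<bar>(avg ^^ n) (indicator {1..}) x\<bar> \<le> 1"
    by (rule abs_avg_pow_le) (rule abs_indicator_le_1)
  then show ?thesis by (simp only: avg_pow_indicator)
qed

definition poisson_survival :: "real \<Rightarrow> nat \<Rightarrow> real" where
  "poisson_survival s x = (\<Sum>n. s^n / fact n * survival n x)"

lemma poisson_survival_sums: "(\<lambda>n. s^n / fact n * survival n x) sums poisson_survival s x"
proof -
  have "summable (\<lambda>n. \<bar>s^n / fact n * survival n x\<bar>)"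
  proof (rule summable_comparison_test'[OF summable_exp_real[of "\<bar>s\<bar>"]])
    show "norm \<bar>s^n / fact n * survival n x\<bar> \<le> \<bar>s\<bar>^n / fact n" for n
      using mult_left_mono[OF abs_survival_le_1, of "\<bar>s\<bar>^n / fact n" n x]
      by (simp add: abs_mult power_abs)
  qed
  then show ?thesis
    unfolding poisson_survival_def by (rule summable_sums[OF summable_rabs_cancel])
qed

lemma phi_eq_heat_series: "q \<ge> 0 \<Longrightarrow> phi q t x = heat_series q t (indicator {1..}) x"
  unfolding phi_def by (rule heat_eq_heat_series[OF _ abs_indicator_le_1])

lemma phi_eq_poisson_survival:
  assumes "q \<ge> 0"
  shows "phi q t x = exp (-(4*q*t)) * poisson_survival (4*q*t) x"
  unfolding phi_eq_heat_series[OF assms] heat_series_eq_poisson[OF abs_indicator_le_1]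
    avg_pow_indicator poisson_survival_def ..

lemma phi_has_real_derivative:
  assumes "q \<ge> 0" and "0 < r"
  shows "((\<lambda>s. phi q s r) has_real_derivative
           2*q*(phi q t (r+1) + phi q t (r-1) - 2 * phi q t r)) (at t)"
  using heat_series_has_real_derivative[OF assms(1) abs_indicator_le_1 assms(2)]
  by (simp add: phi_eq_heat_series[OF assms(1)])

lemma poisson_survival_mono:
  assumes "s \<ge> 0" and "x \<le> y"
  shows "poisson_survival s x \<le> poisson_survival s y"
proof (rule sums_le[OF _ poisson_survival_sums poisson_survival_sums])
  show "s^n / fact n * survival n x \<le> s^n / fact n * survival n y" for n
    by (rule mult_left_mono[OF survival_mono[OF assms(2)]]) (use assms(1) in simp)
qed

lemma poisson_survival_concave:
  assumes "s \<ge> 0" and "1 \<le> r"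
  shows "poisson_survival s (r + 1) + poisson_survival s (r - 1) - 2 * poisson_survival s r \<le> 0"
proof (rule sums_le[OF _ _ sums_zero])
  show "(\<lambda>n. s^n / fact n * (survival n (r + 1) + survival n (r - 1) - 2 * survival n r)) sums
      (poisson_survival s (r + 1) + poisson_survival s (r - 1) - 2 * poisson_survival s r)"
    using sums_diff[OF sums_add[OF poisson_survival_sums[of s "r + 1"] poisson_survival_sums[of s "r - 1"]]
        sums_mult[OF poisson_survival_sums[of s r], of 2]]
    by (simp add: algebra_simps)
  show "s^n / fact n * (survival n (r + 1) + survival n (r - 1) - 2 * survival n r) \<le> 0" for n
    using assms survival_concave[of r n] by (intro mult_nonneg_nonpos) simp_all
qed

lemma le_amgm_bound:
  fixes d e m :: real
  assumes "e > 0" and "m > 0" and "d^2 * m \<le> 1"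
  shows "d \<le> (e + 1 / (e*m)) / 2"
proof -
  have "2*e*d \<le> e^2 + d^2"
    using sum_squares_bound[of e d] by (simp add: power2_eq_square)
  also have "d^2 \<le> 1/m"
    using assms(2,3) by (simp add: field_simps)
  finally have "2*e*d \<le> e^2 + 1/m" by simp
  with assms(1,2) show ?thesis
    by (simp add: field_simps power2_eq_square)
qed

lemma sums_exp_minus_1_div:
  fixes s :: real
  assumes "s > 0"
  shows "(\<lambda>n. s^n / fact (Suc n)) sums ((exp s - 1) / s)"
proof -
  have "(\<lambda>n. s^n / fact n) sums exp s"
    using exp_converges[of s] by (simp add: field_simps)
  then have "(\<lambda>n. s^Suc n / fact (Suc n) / s) sums ((exp s - 1) / s)"
    by (intro sums_divide) (subst sums_Suc_iff, simp)
  then show ?thesis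
    using assms by (simp del: fact_Suc)
qed

text \<open>Since \<open>walk_mass n 1 \<le> 1/sqrt (n + 1)\<close>, AM-GM with the weight \<open>1/sqrt s\<close> splits the
  bound into \<open>exp s\<close> and the Poisson moment \<open>\<Sum> s\<^sup>n/(n + 1)! \<le> exp s / s\<close>.\<close>
lemma poisson_survival_le:
  assumes "s > 0"
  shows "poisson_survival s r \<le> exp s * real r / sqrt s"
proof -
  define e where "e = 1 / sqrt s"
  have "e > 0" using assms by (simp add: e_def)
  have term_le: "s^n / fact n * survival n r
      \<le> (real r * e / 2) * (s^n / fact n) + (real r / (2*e)) * (s^n / fact (Suc n))" for n
  proof -
    have "walk_mass n 1 \<le> (e + 1 / (e * (n + 1))) / 2"
      using walk_mass_1_sq_le[of n] by (intro le_amgm_bound \<open>e > 0\<close>) simp_all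
    then have "survival n r \<le> real r * ((e + 1 / (e * (n + 1))) / 2)"
      using survival_le[of n r] by (meson mult_left_mono of_nat_0_le_iff order_trans)
    then have "s^n / fact n * survival n r \<le> s^n / fact n * (real r * ((e + 1 / (e * (n + 1))) / 2))"
      by (rule mult_left_mono) (use assms in simp)
    also have "\<dots> = (real r * e / 2) * (s^n / fact n) + (real r / (2*e)) * (s^n / fact (Suc n))"
      using \<open>e > 0\<close> by (simp add: fact_Suc field_simps del: of_nat_Suc)
    finally show ?thesis .
  qed
  have "(\<lambda>n. (real r * e / 2) * (s^n / fact n) + (real r / (2*e)) * (s^n / fact (Suc n)))
        sums ((real r * e / 2) * exp s + (real r / (2*e)) * ((exp s - 1) / s))"
    using exp_converges[of s]
    by (intro sums_add sums_mult sums_exp_minus_1_div assms) (simp add: field_simps)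
  then have "poisson_survival s r \<le> (real r * e / 2) * exp s + (real r / (2*e)) * ((exp s - 1) / s)"
    by (rule sums_le[OF term_le poisson_survival_sums])
  also have "\<dots> \<le> (real r * e / 2) * exp s + (real r / (2*e)) * (exp s / s)"
    using assms \<open>e > 0\<close> by (intro add_left_mono mult_left_mono divide_right_mono) simp_all
  also have "\<dots> = exp s * real r / sqrt s"
    using assms by (simp add: e_def field_simps)
  finally show ?thesis .
qed

lemma phi_second_difference_nonpos:
  assumes "q \<ge> 0" and "t \<ge> 0" and "1 \<le> r"
  shows "phi q t (r + 1) + phi q t (r - 1) - 2 * phi q t r \<le> 0"
proof -
  have "phi q t (r + 1) + phi q t (r - 1) - 2 * phi q t r = exp (-(4*q*t)) *
      (poisson_survival (4*q*t) (r + 1) + poisson_survival (4*q*t) (r - 1)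
        - 2 * poisson_survival (4*q*t) r)"
    by (simp add: phi_eq_poisson_survival[OF assms(1)] algebra_simps)
  also have "\<dots> \<le> 0"
    using poisson_survival_concave[of "4*q*t" r] assms by (simp add: mult_nonneg_nonpos)
  finally show ?thesis .
qed

lemma phi_mono:
  assumes "q \<ge> 0" and "t \<ge> 0" and "x \<le> y"
  shows "phi q t x \<le> phi q t y"
  using poisson_survival_mono[of "4*q*t" x y] assms by (simp add: phi_eq_poisson_survival)

lemma phi_le:
  assumes "q > 0" and "t > 0"
  shows "phi q t r \<le> real r / (2 * sqrt (t * q))"
proof -
  have "phi q t r = exp (-(4*q*t)) * poisson_survival (4*q*t) r"
    using assms by (simp add: phi_eq_poisson_survival)
  also have "\<dots> \<le> exp (-(4*q*t)) * (exp (4*q*t) * real r / sqrt (4*q*t))"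
    using assms by (intro mult_left_mono poisson_survival_le) simp_all
  also have "\<dots> = real r / sqrt (4*q*t)"
    by (simp add: exp_minus field_simps)
  also have "sqrt (4*q*t) = 2 * sqrt (t * q)"
    by (simp add: real_sqrt_mult mult.commute)
  finally show ?thesis .
qed

theorem mainTheorem6:
  fixes qmin :: real
  assumes "qmin > 0"
  shows "(\<forall>(r::nat) (t::real). r \<ge> 1 \<and> t > 0 \<longrightarrow>
            ((\<lambda>s. phi qmin s r) has_real_derivative
               2 * qmin * (phi qmin t (r + 1) + phi qmin t (r - 1) - 2 * phi qmin t r)) (at t)
            \<and> 2 * qmin * (phi qmin t (r + 1) + phi qmin t (r - 1) - 2 * phi qmin t r) \<le> 0)
       \<and> (\<forall>(t::real) (x::nat) (y::nat). t \<ge> 0 \<and> y \<ge> x \<longrightarrow> phi qmin t y \<ge> phi qmin t x)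
       \<and> (\<forall>(r::nat) (t::real). r \<ge> 1 \<and> t > 0 \<longrightarrow>
            phi qmin t r \<le> real r / (2 * sqrt (t * qmin)))"
proof (intro conjI allI impI; elim conjE)
  fix r :: nat and t :: real
  assume "1 \<le> r" "0 < t"
  then show "((\<lambda>s. phi qmin s r) has_real_derivative
               2 * qmin * (phi qmin t (r + 1) + phi qmin t (r - 1) - 2 * phi qmin t r)) (at t)"
    using phi_has_real_derivative[of qmin r t] assms by simp
  show "2 * qmin * (phi qmin t (r + 1) + phi qmin t (r - 1) - 2 * phi qmin t r) \<le> 0"
    using phi_second_difference_nonpos[of qmin t r] assms \<open>1 \<le> r\<close> \<open>0 < t\<close>
    by (simp add: mult_nonneg_nonpos)
next
  fix t :: real and x y :: nat
  assume "0 \<le> t" "x \<le> y"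
  then show "phi qmin t x \<le> phi qmin t y"
    using phi_mono assms by simp
next
  fix r :: nat and t :: real
  assume "0 < t"
  then show "phi qmin t r \<le> real r / (2 * sqrt (t * qmin))"
    using phi_le assms by blast
qed

end
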